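(* Let $\mathcal{A}$ be a pca in which $0,1$ are separable, and let $\gamma:\mathcal{A}\to S$ be a precomplete generalized numbering. Then $\gamma$ is not injective.
   Context: A pca is a set $\mathcal{A}$ with partial binary application containing $k,s$ with $kab=a$, $sab\downarrow$, $sabc\simeq ac(bc)$. With $i=skk$, $\mathsf{false}=ki$, $\langle a,b\rangle=\lambda^*z.zab$ ($\lambda^*$ standard combinatory abstraction), $0=\bar 0=i$, $\overline{n+1}=\langle\mathsf{false},\bar n\rangle$, $1=\bar 1$. $0,1$ are separable in $\mathcal{A}$ if there is a total $c\in\mathcal{A}$ with $ca\in\{0,1\}$ for all $a$ such that $ca=0\Rightarrow a\neq1$ and $ca=1\Rightarrow a\neq 0$. A generalized numbering is a surjective map $\gamma:\mathcal{A}\to S$ onto a set $S$; write $a\sim_\gamma a'$ iff $\gamma(a)=\gamma(a')$. $\gamma$ is precomplete if for every $b\in\mathcal{A}$ there is a total $f\in\mathcal{A}$ (i.e. $fa$ defined for all $a$) such that for all $a\in\mathcal{A}$, $ba\downarrow\Rightarrow fa\sim_\gamma ba$. *)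

theory Defs
  imports Main
begin

text \<open>A partial applicative structure: partial application is modelled as
  a function into option; None means undefined.  Application of possibly
  undefined terms (strict, Kleene style):\<close>

definition ap :: "('a \<Rightarrow> 'a \<Rightarrow> 'a option) \<Rightarrow> 'a option \<Rightarrow> 'a option \<Rightarrow> 'a option" where
  "ap app x y = Option.bind x (\<lambda>u. Option.bind y (\<lambda>v. app u v))"

definition is_pca :: "('a \<Rightarrow> 'a \<Rightarrow> 'a option) \<Rightarrow> 'a \<Rightarrow> 'a \<Rightarrow> bool" where
  "is_pca app k s \<longleftrightarrow>
     (\<forall>a b. ap app (ap app (Some k) (Some a)) (Some b) = Some a) \<and>
     (\<forall>a b. ap app (ap app (Some s) (Some a)) (Some b) \<noteq> None) \<and>
     (\<forall>a b c. ap app (ap app (ap app (Some s) (Some a)) (Some b)) (Some c)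
              = ap app (ap app (Some a) (Some c)) (ap app (Some b) (Some c)))"

definition pca_i :: "('a \<Rightarrow> 'a \<Rightarrow> 'a option) \<Rightarrow> 'a \<Rightarrow> 'a \<Rightarrow> 'a option" where
  "pca_i app k s = ap app (ap app (Some s) (Some k)) (Some k)"

definition pca_false :: "('a \<Rightarrow> 'a \<Rightarrow> 'a option) \<Rightarrow> 'a \<Rightarrow> 'a \<Rightarrow> 'a option" where
  "pca_false app k s = ap app (Some k) (pca_i app k s)"

text \<open>Pairing <a,b> = \<lambda>*z. z a b, computed by standard combinatory abstraction:
  \<lambda>*z.((z a) b) = s (\<lambda>*z. z a) (\<lambda>*z. b) = s (s i (k a)) (k b).\<close>
definition pca_pair :: "('a \<Rightarrow> 'a \<Rightarrow> 'a option) \<Rightarrow> 'a \<Rightarrow> 'a \<Rightarrow> 'a option \<Rightarrow> 'a option \<Rightarrow> 'a option" where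
  "pca_pair app k s a b =
     ap app (ap app (Some s)
                    (ap app (ap app (Some s) (pca_i app k s)) (ap app (Some k) a)))
            (ap app (Some k) b)"

fun pca_num :: "('a \<Rightarrow> 'a \<Rightarrow> 'a option) \<Rightarrow> 'a \<Rightarrow> 'a \<Rightarrow> nat \<Rightarrow> 'a option" where
  "pca_num app k s 0 = pca_i app k s"
| "pca_num app k s (Suc n) = pca_pair app k s (pca_false app k s) (pca_num app k s n)"

definition zero_one_separable :: "('a \<Rightarrow> 'a \<Rightarrow> 'a option) \<Rightarrow> 'a \<Rightarrow> 'a \<Rightarrow> bool" where
  "zero_one_separable app k s \<longleftrightarrow>
     (\<exists>c. \<forall>a. app c a \<noteq> None \<and>
              (app c a = pca_num app k s 0 \<or> app c a = pca_num app k s 1) \<and>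
              (app c a = pca_num app k s 0 \<longrightarrow> Some a \<noteq> pca_num app k s 1) \<and>
              (app c a = pca_num app k s 1 \<longrightarrow> Some a \<noteq> pca_num app k s 0))"

definition precomplete :: "('a \<Rightarrow> 'a \<Rightarrow> 'a option) \<Rightarrow> ('a \<Rightarrow> 's) \<Rightarrow> bool" where
  "precomplete app \<gamma> \<longleftrightarrow>
     (\<forall>b. \<exists>f. (\<forall>a. app f a \<noteq> None) \<and>
              (\<forall>a x. app b a = Some x \<longrightarrow> (\<exists>y. app f a = Some y \<and> \<gamma> y = \<gamma> x)))"

end

theory Submission
  imports Defs
begin

text \<open>If \<gamma> is injective, precompleteness says that every partial element b of the
  pca has a total extension f.  Separability of 0 and 1 rules this out by
  diagonalisation: let b x \<simeq> 1 if c (x x) = 0 and b x \<simeq> 0 if c (x x) = 1.  For a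
  total extension f of b, the value y = f f satisfies y = b f, so c y = 0 forces
  y = 1 and c y = 1 forces y = 0, both excluded by the choice of c.\<close>

definition total_elem :: "('a \<Rightarrow> 'a \<Rightarrow> 'a option) \<Rightarrow> 'a \<Rightarrow> bool" where
  "total_elem app f \<longleftrightarrow> (\<forall>a. app f a \<noteq> None)"

definition extends_elem :: "('a \<Rightarrow> 'a \<Rightarrow> 'a option) \<Rightarrow> 'a \<Rightarrow> 'a \<Rightarrow> bool" where
  "extends_elem app f b \<longleftrightarrow> (\<forall>a x. app b a = Some x \<longrightarrow> app f a = Some x)"

lemma precomplete_inj_total_extension:
  assumes "precomplete app \<gamma>" and "inj \<gamma>"
  obtains f where "total_elem app f" and "extends_elem app f b"
proof -
  from assms(1) obtain f where "\<forall>a. app f a \<noteq> None"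
    and "\<forall>a x. app b a = Some x \<longrightarrow> (\<exists>y. app f a = Some y \<and> \<gamma> y = \<gamma> x)"
    unfolding precomplete_def by blast
  with assms(2) have "total_elem app f" and "extends_elem app f b"
    unfolding total_elem_def extends_elem_def by (fastforce simp: inj_eq)+
  then show thesis by (rule that)
qed

locale pca =
  fixes app :: "'a \<Rightarrow> 'a \<Rightarrow> 'a option" and k s :: 'a
  assumes is_pca: "is_pca app k s"
begin

definition K :: "'a \<Rightarrow> 'a" where
  "K a = the (app k a)"

definition S :: "'a \<Rightarrow> 'a \<Rightarrow> 'a" where
  "S a b = the (Option.bind (app s a) (\<lambda>u. app u b))"

definition I :: 'a where
  "I = S k k"

definition One :: 'a where
  "One = S (S I (K (K I))) (K I)"

lemmas is_pca_unfolded = is_pca[unfolded is_pca_def ap_def]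

lemma app_k: "app k a = Some (K a)"
  using is_pca_unfolded[THEN conjunct1, rule_format, of a a]
  by (cases "app k a") (auto simp: K_def)

lemma app_K: "app (K a) b = Some a"
  using is_pca_unfolded app_k[of a] by (metis bind.simps(2))

lemma app_s_bind: "Option.bind (app s a) (\<lambda>u. app u b) = Some (S a b)"
  using is_pca_unfolded[THEN conjunct2, THEN conjunct1, rule_format, of a b]
  by (cases "Option.bind (app s a) (\<lambda>u. app u b)") (auto simp: S_def)

lemma app_S: "app (S a b) c = ap app (app a c) (app b c)"
  using is_pca_unfolded[THEN conjunct2, THEN conjunct2, rule_format, of a b c] app_s_bind[of a b]
  by (simp add: ap_def)

lemma app_I: "app I a = Some a"
  by (simp add: I_def app_S ap_def app_k app_K)

lemma pca_num_zero: "pca_num app k s 0 = Some I"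
  by (simp add: pca_i_def ap_def app_s_bind I_def)

lemma pca_num_one: "pca_num app k s 1 = Some One"
  by (simp add: pca_i_def pca_false_def pca_pair_def ap_def app_s_bind app_k
      I_def[symmetric] One_def)

definition branch :: "'a \<Rightarrow> 'a \<Rightarrow> 'a \<Rightarrow> 'a option" where
  "branch r x y = ap app (ap app (app r k) (Some x)) (Some y)"

lemma branch_zero: "branch I x y = Some x"
  by (simp add: branch_def ap_def app_I app_k app_K)

lemma branch_one: "branch One x y = Some y"
  by (simp add: branch_def One_def app_S ap_def app_I app_k app_K)

text \<open>The combinatory term for \<lambda>x. c (x x) k 1 0.\<close>
definition diag :: "'a \<Rightarrow> 'a" where
  "diag c = S (S (S (S (K c) (S I I)) (K k)) (K One)) (K I)"

lemma app_diag:
  "app (diag c) x = Option.bind (app x x) (\<lambda>y. Option.bind (app c y) (\<lambda>r. branch r One I))"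
  by (simp add: diag_def branch_def app_S ap_def app_K app_I)

lemma separable_no_total_extension:
  assumes "zero_one_separable app k s"
  obtains b where "\<And>f. total_elem app f \<Longrightarrow> \<not> extends_elem app f b"
proof -
  from assms obtain c where c: "\<And>a. app c a = Some I \<or> app c a = Some One"
    and c_zero: "\<And>a. app c a = Some I \<Longrightarrow> a \<noteq> One"
    and c_one: "\<And>a. app c a = Some One \<Longrightarrow> a \<noteq> I"
    unfolding zero_one_separable_def pca_num_zero pca_num_one by blast
  show thesis
  proof (rule that, rule notI)
    fix f assume "total_elem app f" and ext: "extends_elem app f (diag c)"
    then obtain y where y: "app f f = Some y"
      unfolding total_elem_def by blast
    have fixed: "app (diag c) f = Some r \<Longrightarrow> y = r" for r
      using ext y unfolding extends_elem_def by simp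
    from c[of y] show False
    proof
      assume "app c y = Some I"
      then have "app (diag c) f = Some One" by (simp add: app_diag y branch_zero)
      then have "y = One" by (rule fixed)
      with c_zero \<open>app c y = Some I\<close> show False by blast
    next
      assume "app c y = Some One"
      then have "app (diag c) f = Some I" by (simp add: app_diag y branch_one)
      then have "y = I" by (rule fixed)
      with c_one \<open>app c y = Some One\<close> show False by blast
    qed
  qed
qed

end

theorem mainTheorem15:
  fixes app :: "'a \<Rightarrow> 'a \<Rightarrow> 'a option" and k s :: 'a and \<gamma> :: "'a \<Rightarrow> 's"
  assumes "is_pca app k s"
    and "zero_one_separable app k s"
    and "surj \<gamma>"
    and "precomplete app \<gamma>"
  shows "\<not> inj \<gamma>"
proof
  assume "inj \<gamma>"
  interpret pca app k s by (rule pca.intro) (fact assms(1))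
  obtain b where no_ext: "\<And>f. total_elem app f \<Longrightarrow> \<not> extends_elem app f b"
    using separable_no_total_extension assms(2) by metis
  obtain f where "total_elem app f" and "extends_elem app f b"
    using precomplete_inj_total_extension assms(4) \<open>inj \<gamma>\<close> by metis
  with no_ext show False by blast
qed

end
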